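(* Let $0<\gamma<2$, $\gamma\neq 4/3$, let $V\in C^3(\mathbb{R})$ with $V\ge 0$, and let $\chi\in C^3(\mathbb{R})$ with $\chi>0$. Consider the flow of the system $(\ast)$ on $\Sigma$ (see context), and set $Z^+=\{(x,y,z,\phi)\in\Sigma: z>0\}$ and $X^0=\{(x,y,z,\phi)\in\Sigma: x=0\}$. Then for every $p\in Z^+\setminus X^0$ the $\alpha$-limit set and $\omega$-limit set of $p$ satisfy $\alpha(p)\subset X^0$ and $\omega(p)\subset\partial Z^+$, where $\partial Z^+$ denotes the boundary of $Z^+$ (the points of $\overline{Z^+}$ with $z=0$).
   Context: The system $(\ast)$ is the autonomous system in $(x,y,z,\phi)\in\mathbb{R}^4$ (prime denotes $d/d\tau$): $x'=\tfrac12 x(2y^2+\gamma z^2)$, $y'=y^3+\tfrac12(\gamma z^2-2)y-\dfrac{x^2 V'(\phi)}{3\sqrt6}+\dfrac{(4-3\gamma)z^2}{2\sqrt6}\,\dfrac{\chi'(\phi)}{\chi(\phi)}$, $z'=\tfrac12 z\big(2y^2+(z^2-1)\gamma\big)-\dfrac{(4-3\gamma)yz}{2\sqrt6}\,\dfrac{\chi'(\phi)}{\chi(\phi)}$, $\phi'=\sqrt{2/3}\,y$, considered on the state space $\Sigma=\{(x,y,z,\phi)\in\mathbb{R}^4: x\ge0,\ z\ge0,\ y^2+z^2+\tfrac13x^2V(\phi)=1\}$. (It arises from a flat FRW cosmology with scalar field $\phi$, potential $V$, coupling $\chi$ and a barotropic fluid of density $\rho$, via $x=1/H$, $y=\dot\phi/(\sqrt6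 H)$, $z=\sqrt{\rho}/(\sqrt3 H)$, $d\tau=3H\,dt$.) For a point $p$, $\omega(p)$ (resp. $\alpha(p)$) is the set of limits of $\psi_{t_i}(p)$ along sequences $t_i\to+\infty$ (resp. $t_i\to-\infty$), $\psi$ being the flow. *)

theory Defs
  imports "HOL-Analysis.Analysis"
begin

type_synonym state = "real \<times> real \<times> real \<times> real"  (* (x, y, z, phi) *)

definition C3 :: "(real \<Rightarrow> real) \<Rightarrow> bool" where
  "C3 f \<longleftrightarrow> (\<exists>f1 f2 f3.
      (\<forall>t. (f has_real_derivative f1 t) (at t)) \<and>
      (\<forall>t. (f1 has_real_derivative f2 t) (at t)) \<and>
      (\<forall>t. (f2 has_real_derivative f3 t) (at t)) \<and>
      continuous_on UNIV f3)"

definition field :: "real \<Rightarrow> (real \<Rightarrow> real) \<Rightarrow> (real \<Rightarrow> real) \<Rightarrow> state \<Rightarrow> state" where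
  "field \<gamma> V chi s = (case s of (x, y, z, \<phi>) \<Rightarrow>
     ( x * (2 * y^2 + \<gamma> * z^2) / 2,
       y^3 + (\<gamma> * z^2 - 2) * y / 2 - x^2 * deriv V \<phi> / (3 * sqrt 6)
         + (4 - 3 * \<gamma>) * z^2 / (2 * sqrt 6) * (deriv chi \<phi> / chi \<phi>),
       z * (2 * y^2 + (z^2 - 1) * \<gamma>) / 2
         - (4 - 3 * \<gamma>) * y * z / (2 * sqrt 6) * (deriv chi \<phi> / chi \<phi>),
       sqrt (2/3) * y ))"

definition Sigma_set :: "(real \<Rightarrow> real) \<Rightarrow> state set" where
  "Sigma_set V = {(x, y, z, \<phi>). x \<ge> 0 \<and> z \<ge> 0 \<and> y^2 + z^2 + x^2 * V \<phi> / 3 = 1}"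

definition Zplus :: "(real \<Rightarrow> real) \<Rightarrow> state set" where
  "Zplus V = {s \<in> Sigma_set V. fst (snd (snd s)) > 0}"

definition X0 :: "(real \<Rightarrow> real) \<Rightarrow> state set" where
  "X0 V = {s \<in> Sigma_set V. fst s = 0}"

definition bdZplus :: "(real \<Rightarrow> real) \<Rightarrow> state set" where
  "bdZplus V = {s \<in> closure (Zplus V). fst (snd (snd s)) = 0}"

definition is_solution :: "real \<Rightarrow> (real \<Rightarrow> real) \<Rightarrow> (real \<Rightarrow> real) \<Rightarrow> (real \<Rightarrow> state) \<Rightarrow> bool" where
  "is_solution \<gamma> V chi u \<longleftrightarrow> (\<forall>t. (u has_vector_derivative field \<gamma> V chi (u t)) (at t))"

definition omega_limit :: "(real \<Rightarrow> state) \<Rightarrow> state set" where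
  "omega_limit u = {q. \<exists>t :: nat \<Rightarrow> real. filterlim t at_top sequentially \<and> (\<lambda>i. u (t i)) \<longlonglongrightarrow> q}"

definition alpha_limit :: "(real \<Rightarrow> state) \<Rightarrow> state set" where
  "alpha_limit u = {q. \<exists>t :: nat \<Rightarrow> real. filterlim t at_bot sequentially \<and> (\<lambda>i. u (t i)) \<longlonglongrightarrow> q}"

end

theory Submission imports Defs begin

(*
  Write a trajectory of the system as (X, Y, Z, Phi).  The equations for
  X and Z are linear in X resp. Z, with continuous coefficients along the trajectory, so the
  signs of X and Z are preserved; likewise the constraint defect
  C = Y^2 + Z^2 + X^2 V(Phi)/3 - 1 satisfies a linear equation C' = (2Y^2 + gamma Z^2) C and
  stays zero.  Hence a trajectory starting in Z+ \ X0 stays in Z+ with X > 0 for all times.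
  The key observation is that the function
      L = ln Z - ln X + (4 - 3 gamma)/4 * ln (chi Phi)
  satisfies L' = -gamma/2 exactly, so L decreases linearly from +infinity to -infinity.
  Along a sequence of times tending to +infinity with u converging to a point having z > 0,
  the quantity ln Z + c ln chi - X, with c = (4 - 3 gamma)/4, stays bounded while it is a lower bound for L (as ln X <= X):
  a contradiction; so omega-limit points have z = 0.  Symmetrically, along times tending to
  -infinity, L is bounded above by Z - ln X + c ln chi, which stays bounded if the limit has
  x > 0; so alpha-limit points have x = 0.
  The file first proves general facts (componentwise derivatives, scalar linear ODEs, C3
  functions, closedness of the state space, a divergence principle), then develops the
  argument in a locale for a single trajectory, and finally instantiates it.
*)

lemma has_vector_derivative_fst:
  "(u has_vector_derivative w) F \<Longrightarrow> ((\<lambda>t. fst (u t)) has_vector_derivative fst w) F"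
  unfolding has_vector_derivative_def by (drule has_derivative_fst) (simp add: fst_scaleR)

lemma has_vector_derivative_snd:
  "(u has_vector_derivative w) F \<Longrightarrow> ((\<lambda>t. snd (u t)) has_vector_derivative snd w) F"
  unfolding has_vector_derivative_def by (drule has_derivative_snd) (simp add: snd_scaleR)

lemma linear_ode_exp_factor:
  fixes f a :: "real \<Rightarrow> real"
  assumes deriv: "\<And>t. (f has_real_derivative a t * f t) (at t)"
    and cont: "continuous_on UNIV a"
  shows "\<exists>A. f t = f 0 * exp A"
proof -
  define T where "T = \<bar>t\<bar> + 1"
  define S where "S = {-T..T}"
  define B where "B = (\<lambda>s. integral {-T..s} a)"
  have B_deriv: "(B has_real_derivative a s) (at s within S)" if "s \<in> S" for s
    using integral_has_real_derivative[OF continuous_on_subset[OF cont]] that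
    unfolding B_def S_def by blast
  have "((\<lambda>s. f s * exp (- B s)) has_real_derivative 0) (at s within S)" if "s \<in> S" for s
  proof -
    have "((\<lambda>s. f s * exp (- B s)) has_real_derivative
        (a s * f s) * exp (- B s) + f s * (exp (- B s) * (- a s))) (at s within S)"
      using has_field_derivative_at_within[OF deriv] B_deriv[OF that]
      by (auto intro!: derivative_eq_intros)
    then show ?thesis by (simp add: algebra_simps)
  qed
  then obtain k where k: "\<forall>s\<in>S. f s * exp (- B s) = k"
    using has_field_derivative_zero_constant[of S "\<lambda>s. f s * exp (- B s)"] S_def by auto
  have "t \<in> S" "0 \<in> S" unfolding S_def T_def by auto
  with k have "f t * exp (- B t) = f 0 * exp (- B 0)" by auto
  then have "f t = f 0 * exp (B t - B 0)" by (simp add: exp_diff exp_minus field_simps)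
  then show ?thesis by blast
qed

corollary linear_ode_pos:
  fixes f a :: "real \<Rightarrow> real"
  assumes "\<And>t. (f has_real_derivative a t * f t) (at t)" "continuous_on UNIV a" "f 0 > 0"
  shows "f t > 0"
  using linear_ode_exp_factor[OF assms(1,2), of t] assms(3) by auto

corollary linear_ode_zero:
  fixes f a :: "real \<Rightarrow> real"
  assumes "\<And>t. (f has_real_derivative a t * f t) (at t)" "continuous_on UNIV a" "f 0 = 0"
  shows "f t = 0"
  using linear_ode_exp_factor[OF assms(1,2), of t] assms(3) by auto

lemma C3_has_deriv:
  assumes "C3 f"
  shows "(f has_real_derivative deriv f t) (at t)" and "continuous_on UNIV (deriv f)"
proof -
  obtain f1 f2 where f1: "\<And>t. (f has_real_derivative f1 t) (at t)"
    and f2: "\<And>t. (f1 has_real_derivative f2 t) (at t)"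
    using assms unfolding C3_def by blast
  have f1_eq: "deriv f = f1" using f1 DERIV_imp_deriv by blast
  show "(f has_real_derivative deriv f t) (at t)" using f1 f1_eq by simp
  show "continuous_on UNIV (deriv f)"
    unfolding f1_eq using f2 DERIV_isCont by (blast intro: continuous_at_imp_continuous_on)
qed

lemma closed_Sigma_set:
  assumes "continuous_on UNIV V"
  shows "closed (Sigma_set V)"
proof -
  have "Sigma_set V = {s. 0 \<le> fst s} \<inter> {s. 0 \<le> fst (snd (snd s))} \<inter>
      {s. fst (snd s)^2 + fst (snd (snd s))^2 + fst s^2 * V (snd (snd (snd s))) / 3 = 1}"
    unfolding Sigma_set_def by auto
  also have "closed \<dots>"
    by (intro closed_Int closed_Collect_le closed_Collect_eq continuous_intros
        continuous_on_compose2[OF assms]) auto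
  finally show ?thesis .
qed

lemma convergent_not_above_divergent:
  fixes f g :: "nat \<Rightarrow> real"
  assumes "filterlim f at_top sequentially" and "g \<longlonglongrightarrow> w"
    and "eventually (\<lambda>i. f i \<le> g i) sequentially"
  shows False
  using not_tendsto_and_filterlim_at_infinity[OF _ assms(2)]
    filterlim_at_top_imp_at_infinity[OF filterlim_at_top_mono[OF assms(1,3)]] by simp

text \<open>Relates the coefficient of the phi-equation to the coupling coefficients.\<close>

lemma sqrt_two_thirds: "sqrt (2/3) = 2 / sqrt 6"
proof -
  have "sqrt 6 = sqrt 2 * sqrt 3" by (simp add: real_sqrt_mult[symmetric])
  moreover have "sqrt 2 * sqrt 2 = 2" by simp
  ultimately show ?thesis unfolding real_sqrt_divide by (simp add: field_simps)
qed

section \<open>A single trajectory through Z+ \ X0\<close>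

locale Zplus_trajectory =
  fixes \<gamma> :: real and V chi :: "real \<Rightarrow> real" and u :: "real \<Rightarrow> state"
  assumes gamma_pos: "0 < \<gamma>"
    and V_deriv: "\<And>s. (V has_real_derivative deriv V s) (at s)"
    and chi_deriv: "\<And>s. (chi has_real_derivative deriv chi s) (at s)"
    and chi_deriv_cont: "continuous_on UNIV (deriv chi)"
    and chi_pos: "\<And>s. chi s > 0"
    and solution: "is_solution \<gamma> V chi u"
    and start: "u 0 \<in> Zplus V - X0 V"
begin

definition X :: "real \<Rightarrow> real" where "X t = fst (u t)"
definition Y :: "real \<Rightarrow> real" where "Y t = fst (snd (u t))"
definition Z :: "real \<Rightarrow> real" where "Z t = fst (snd (snd (u t)))"
definition Phi :: "real \<Rightarrow> real" where "Phi t = snd (snd (snd (u t)))"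

lemma u_eq: "u t = (X t, Y t, Z t, Phi t)"
  unfolding X_def Y_def Z_def Phi_def by simp

definition k :: real where "k = (4 - 3 * \<gamma>) / (2 * sqrt 6)"
definition q :: "real \<Rightarrow> real" where "q t = deriv chi (Phi t) / chi (Phi t)"

lemma component_derivatives:
  shows X_deriv: "(X has_real_derivative X t * (2 * Y t^2 + \<gamma> * Z t^2) / 2) (at t)"
    and Y_deriv: "(Y has_real_derivative Y t^3 + (\<gamma> * Z t^2 - 2) * Y t / 2
        - X t^2 * deriv V (Phi t) / (3 * sqrt 6) + k * Z t^2 * q t) (at t)"
    and Z_deriv: "(Z has_real_derivative Z t * (2 * Y t^2 + (Z t^2 - 1) * \<gamma>) / 2
        - k * Y t * Z t * q t) (at t)"
    and Phi_deriv: "(Phi has_real_derivative sqrt (2/3) * Y t) (at t)"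
proof -
  have du: "(u has_vector_derivative field \<gamma> V chi (X t, Y t, Z t, Phi t)) (at t)"
    using solution u_eq[of t] unfolding is_solution_def by metis
  note fst = has_vector_derivative_fst and snd = has_vector_derivative_snd
  show "(X has_real_derivative X t * (2 * Y t^2 + \<gamma> * Z t^2) / 2) (at t)"
    using fst[OF du] unfolding has_real_derivative_iff_has_vector_derivative
    by (simp add: field_def X_def[abs_def])
  show "(Y has_real_derivative Y t^3 + (\<gamma> * Z t^2 - 2) * Y t / 2
      - X t^2 * deriv V (Phi t) / (3 * sqrt 6) + k * Z t^2 * q t) (at t)"
    using fst[OF snd[OF du]] unfolding has_real_derivative_iff_has_vector_derivative
    by (simp add: field_def Y_def[abs_def] k_def q_def)
  show "(Z has_real_derivative Z t * (2 * Y t^2 + (Z t^2 - 1) * \<gamma>) / 2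
      - k * Y t * Z t * q t) (at t)"
    using fst[OF snd[OF snd[OF du]]] unfolding has_real_derivative_iff_has_vector_derivative
    by (simp add: field_def Z_def[abs_def] k_def q_def)
  show "(Phi has_real_derivative sqrt (2/3) * Y t) (at t)"
    using snd[OF snd[OF snd[OF du]]] unfolding has_real_derivative_iff_has_vector_derivative
    by (simp add: field_def Phi_def[abs_def])
qed

lemma continuous_components: "isCont X t" "isCont Y t" "isCont Z t" "isCont Phi t"
  using component_derivatives DERIV_isCont by blast+

lemma isCont_q: "isCont q t"
proof -
  have "isCont (\<lambda>t. deriv chi (Phi t)) t" "isCont (\<lambda>t. chi (Phi t)) t"
    using continuous_components(4) chi_deriv_cont DERIV_isCont[OF chi_deriv]
    by (auto intro: isCont_o2 simp: continuous_on_eq_continuous_at)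
  then show ?thesis
    unfolding q_def using chi_pos[of "Phi t"] by (intro continuous_intros) auto
qed

lemma initial_values: "X 0 > 0" "Z 0 > 0" "Y 0^2 + Z 0^2 + X 0^2 * V (Phi 0) / 3 = 1"
  using start u_eq[of 0] by (auto simp: Zplus_def X0_def Sigma_set_def)

text \<open>X and Z solve linear equations, hence stay positive.\<close>

lemma X_pos: "X t > 0"
proof (rule linear_ode_pos[where f = X])
  show "X 0 > 0" by (rule initial_values(1))
  show "(X has_real_derivative (\<lambda>t. (2 * Y t^2 + \<gamma> * Z t^2) / 2) t * X t) (at t)" for t
    using X_deriv[of t] by (simp add: algebra_simps)
  show "continuous_on UNIV (\<lambda>t. (2 * Y t^2 + \<gamma> * Z t^2) / 2)"
    by (intro continuous_at_imp_continuous_on ballI continuous_intros continuous_components)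
      auto
qed

lemma Z_pos: "Z t > 0"
proof (rule linear_ode_pos[where f = Z])
  show "Z 0 > 0" by (rule initial_values(2))
  show "(Z has_real_derivative
      (\<lambda>t. (2 * Y t^2 + (Z t^2 - 1) * \<gamma>) / 2 - k * Y t * q t) t * Z t) (at t)" for t
    using Z_deriv[of t] by (simp add: algebra_simps)
  show "continuous_on UNIV (\<lambda>t. (2 * Y t^2 + (Z t^2 - 1) * \<gamma>) / 2 - k * Y t * q t)"
    by (intro continuous_at_imp_continuous_on ballI continuous_intros continuous_components
        isCont_q) auto
qed

text \<open>The constraint defect satisfies C' = (2 Y^2 + gamma Z^2) C, so the constraint
  defining Sigma is invariant.\<close>

definition C :: "real \<Rightarrow> real" where "C t = Y t^2 + Z t^2 + X t^2 * V (Phi t) / 3 - 1"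

lemma C_deriv: "(C has_real_derivative (2 * Y t^2 + \<gamma> * Z t^2) * C t) (at t)"
proof -
  have "(C has_real_derivative
      2 * Y t * (Y t^3 + (\<gamma> * Z t^2 - 2) * Y t / 2 - X t^2 * deriv V (Phi t) / (3 * sqrt 6)
        + k * Z t^2 * q t)
      + 2 * Z t * (Z t * (2 * Y t^2 + (Z t^2 - 1) * \<gamma>) / 2 - k * Y t * Z t * q t)
      + 2 * X t * (X t * (2 * Y t^2 + \<gamma> * Z t^2) / 2) * V (Phi t) / 3
      + X t^2 * (deriv V (Phi t) * (sqrt (2/3) * Y t)) / 3) (at t)"
    (is "(C has_real_derivative ?D) _")
    unfolding C_def[abs_def] using component_derivatives[of t] DERIV_chain2[OF V_deriv Phi_deriv]
    by (auto intro!: derivative_eq_intros)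
  moreover have "?D = (2 * Y t^2 + \<gamma> * Z t^2) * C t"
    unfolding C_def sqrt_two_thirds by (simp add: field_simps power2_eq_square power3_eq_cube)
  ultimately show ?thesis by simp
qed

lemma constraint: "Y t^2 + Z t^2 + X t^2 * V (Phi t) / 3 = 1"
proof -
  have "C t = 0"
  proof (rule linear_ode_zero[OF C_deriv])
    show "continuous_on UNIV (\<lambda>t. 2 * Y t^2 + \<gamma> * Z t^2)"
      by (intro continuous_at_imp_continuous_on ballI continuous_intros continuous_components)
    show "C 0 = 0" using initial_values(3) by (simp add: C_def)
  qed
  then show ?thesis by (simp add: C_def)
qed

lemma in_Zplus: "u t \<in> Zplus V" and in_Sigma: "u t \<in> Sigma_set V"
  using X_pos[of t] Z_pos[of t] constraint[of t]
  by (simp_all add: u_eq Zplus_def Sigma_set_def less_imp_le)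

lemma ln_X_deriv: "((\<lambda>t. ln (X t)) has_real_derivative (2 * Y t^2 + \<gamma> * Z t^2) / 2) (at t)"
  by (rule DERIV_cong[OF DERIV_chain2[OF DERIV_ln[OF X_pos] X_deriv]])
    (use X_pos[of t] in \<open>simp add: field_simps\<close>)

lemma ln_Z_deriv:
  "((\<lambda>t. ln (Z t)) has_real_derivative (2 * Y t^2 + (Z t^2 - 1) * \<gamma>) / 2 - k * Y t * q t) (at t)"
  by (rule DERIV_cong[OF DERIV_chain2[OF DERIV_ln[OF Z_pos] Z_deriv]])
    (use Z_pos[of t] in \<open>simp add: field_simps\<close>)

lemma ln_chi_deriv:
  "((\<lambda>t. ln (chi (Phi t))) has_real_derivative sqrt (2/3) * Y t * q t) (at t)"
  using DERIV_chain2[OF DERIV_ln[OF chi_pos] DERIV_chain2[OF chi_deriv Phi_deriv[of t]]]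
  by (simp add: q_def field_simps)

text \<open>The monotone function: its derivative is the constant -gamma/2, because the
  chi-terms in (ln Z)' and in c (ln chi)' cancel.\<close>

definition c :: real where "c = (4 - 3 * \<gamma>) / 4"
definition L :: "real \<Rightarrow> real" where
  "L t = ln (Z t) - ln (X t) + c * ln (chi (Phi t))"

lemma c_k: "c * sqrt (2/3) = k"
  unfolding c_def k_def sqrt_two_thirds by (simp add: field_simps)

lemma L_deriv: "(L has_real_derivative - \<gamma> / 2) (at t)"
proof -
  have "(L has_real_derivative
      ((2 * Y t^2 + (Z t^2 - 1) * \<gamma>) / 2 - k * Y t * q t) - (2 * Y t^2 + \<gamma> * Z t^2) / 2
        + c * (sqrt (2/3) * Y t * q t)) (at t)"
    unfolding L_def[abs_def] by (intro DERIV_add DERIV_diff DERIV_cmult ln_X_deriv ln_Z_deriv ln_chi_deriv)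
  then show ?thesis by (rule DERIV_cong) (simp add: field_simps flip: c_k)
qed

lemma L_linear: "L t = L 0 - \<gamma> * t / 2"
proof -
  have "((\<lambda>t. L t + \<gamma> * t / 2) has_real_derivative 0) (at t)" for t
    using L_deriv[of t] by (auto intro!: derivative_eq_intros)
  then show ?thesis using DERIV_isconst_all[of "\<lambda>t. L t + \<gamma> * t / 2" t 0] by simp
qed

lemma L_at_top: "filterlim (\<lambda>t. - L t) at_top at_top"
  and L_at_bot: "filterlim L at_top at_bot"
proof -
  define l0 where "l0 = L 0"
  have L_eq: "L t = l0 - \<gamma> * t / 2" for t
    unfolding l0_def by (rule L_linear)
  have "filterlim (\<lambda>t. c0 + \<gamma> / 2 * t) at_top at_top" for c0
    using gamma_pos by (intro filterlim_tendsto_add_at_top tendsto_const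
        filterlim_tendsto_pos_mult_at_top[OF tendsto_const] filterlim_ident) auto
  from this[of "- l0"] this[of l0] show "filterlim (\<lambda>t. - L t) at_top at_top"
    and "filterlim L at_top at_bot"
    unfolding filterlim_at_bot_mirror by (simp_all add: L_eq algebra_simps)
qed

lemma tendsto_components:
  assumes "(\<lambda>i. u (tt i)) \<longlonglongrightarrow> (x, y, z, \<phi>)"
  shows "(\<lambda>i. X (tt i)) \<longlonglongrightarrow> x" and "(\<lambda>i. Z (tt i)) \<longlonglongrightarrow> z"
    and "(\<lambda>i. Phi (tt i)) \<longlonglongrightarrow> \<phi>"
  using tendsto_fst[OF assms] tendsto_fst[OF tendsto_snd[OF tendsto_snd[OF assms]]]
    tendsto_snd[OF tendsto_snd[OF tendsto_snd[OF assms]]]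
  by (simp_all add: X_def Z_def Phi_def)

lemma chi_continuous: "isCont chi s"
  using DERIV_isCont[OF chi_deriv] .

lemma tendsto_ln_chi:
  assumes "f \<longlonglongrightarrow> \<phi>"
  shows "(\<lambda>i. ln (chi (f i))) \<longlonglongrightarrow> ln (chi \<phi>)"
  using isCont_tendsto_compose[OF chi_continuous assms] chi_pos[of \<phi>]
  by (intro tendsto_ln) auto

text \<open>Forward in time: at an omega-limit point with z > 0 the bound
  -L <= X - ln Z - c ln chi(Phi) (from ln X <= X) would stay bounded, but -L diverges.\<close>

lemma omega_limit_subset: "omega_limit u \<subseteq> bdZplus V"
proof
  fix p assume "p \<in> omega_limit u"
  then obtain tt where tt: "filterlim tt at_top sequentially" and lim: "(\<lambda>i. u (tt i)) \<longlonglongrightarrow> p"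
    unfolding omega_limit_def by blast
  obtain x y z \<phi> where p: "p = (x, y, z, \<phi>)" by (cases p) auto
  note lims = tendsto_components[OF lim[unfolded p]]
  have "z = 0"
  proof (rule ccontr)
    assume "z \<noteq> 0"
    moreover have "0 \<le> z"
      by (rule LIMSEQ_le_const[OF lims(2)]) (use Z_pos less_imp_le in blast)
    ultimately have "z > 0" by simp
    then have bound_lim: "(\<lambda>i. X (tt i) - ln (Z (tt i)) - c * ln (chi (Phi (tt i))))
        \<longlonglongrightarrow> x - ln z - c * ln (chi \<phi>)"
      using \<open>z > 0\<close> by (intro tendsto_diff tendsto_mult tendsto_const tendsto_ln lims
          tendsto_ln_chi) auto
    have "- L (tt i) \<le> X (tt i) - ln (Z (tt i)) - c * ln (chi (Phi (tt i)))" for i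
      using ln_le_minus_one[OF X_pos[of "tt i"]] unfolding L_def by linarith
    then show False
      using convergent_not_above_divergent[OF filterlim_compose[OF L_at_top tt] bound_lim]
      by simp
  qed
  moreover have "p \<in> closure (Zplus V)"
    unfolding closure_sequential using in_Zplus lim by (intro exI[of _ "\<lambda>i. u (tt i)"]) simp
  ultimately show "p \<in> bdZplus V" unfolding bdZplus_def p by simp
qed

text \<open>Backward in time: at an alpha-limit point with x > 0 the bound
  L <= Z - ln X + c ln chi(Phi) (from ln Z <= Z) would stay bounded, but L diverges.\<close>

lemma alpha_limit_subset: "alpha_limit u \<subseteq> X0 V"
proof
  fix p assume "p \<in> alpha_limit u"
  then obtain tt where tt: "filterlim tt at_bot sequentially" and lim: "(\<lambda>i. u (tt i)) \<longlonglongrightarrow> p"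
    unfolding alpha_limit_def by blast
  obtain x y z \<phi> where p: "p = (x, y, z, \<phi>)" by (cases p) auto
  note lims = tendsto_components[OF lim[unfolded p]]
  have "continuous_on UNIV V"
    using DERIV_isCont[OF V_deriv] by (blast intro: continuous_at_imp_continuous_on)
  then have in_Sigma_p: "p \<in> Sigma_set V"
    using closed_sequentially[OF closed_Sigma_set _ lim] in_Sigma by blast
  have "x = 0"
  proof (rule ccontr)
    assume "x \<noteq> 0"
    moreover have "0 \<le> x" using in_Sigma_p unfolding p Sigma_set_def by simp
    ultimately have "x > 0" by simp
    then have bound_lim: "(\<lambda>i. Z (tt i) - ln (X (tt i)) + c * ln (chi (Phi (tt i))))
        \<longlonglongrightarrow> z - ln x + c * ln (chi \<phi>)"
      using \<open>x > 0\<close> by (intro tendsto_add tendsto_diff tendsto_mult tendsto_const tendsto_ln lims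
          tendsto_ln_chi) auto
    have "L (tt i) \<le> Z (tt i) - ln (X (tt i)) + c * ln (chi (Phi (tt i)))" for i
      using ln_le_minus_one[OF Z_pos[of "tt i"]] unfolding L_def by linarith
    then show False
      using convergent_not_above_divergent[OF filterlim_compose[OF L_at_bot tt] bound_lim]
      by simp
  qed
  then show "p \<in> X0 V" using in_Sigma_p unfolding X0_def p by simp
qed

end

theorem lemma1:
  fixes \<gamma> :: real and V chi :: "real \<Rightarrow> real" and p :: state and u :: "real \<Rightarrow> state"
  assumes "0 < \<gamma>" and "\<gamma> < 2" and "\<gamma> \<noteq> 4/3"
    and "C3 V" and "\<And>t. V t \<ge> 0"
    and "C3 chi" and "\<And>t. chi t > 0"
    and "p \<in> Zplus V - X0 V"
    and "is_solution \<gamma> V chi u" and "u 0 = p"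
  shows "alpha_limit u \<subseteq> X0 V \<and> omega_limit u \<subseteq> bdZplus V"
proof -
  interpret Zplus_trajectory \<gamma> V chi u
    using assms C3_has_deriv[OF \<open>C3 V\<close>] C3_has_deriv[OF \<open>C3 chi\<close>]
    by unfold_locales auto
  show ?thesis using alpha_limit_subset omega_limit_subset by blast
qed

end
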